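(* Let $\mathcal{A}=(Q,\Sigma,\delta)$ be a strongly connected DFA with $n$ states, let $P$ be a positive probability distribution on $\Sigma$, and let $\alpha$ be a stationary distribution of the Markov chain of $\mathcal{A}$ under $P$, i.e. a stochastic vector with $\alpha\sum_{a\in\Sigma}P(a)[a]=\alpha$. Then $\mathcal{A}$ is synchronizing if and only if there exists a set of words $W\subseteq\Sigma^*$ which is complete for $\mathbb{R}^n$ with respect to $\alpha$.
   Context: A DFA $\mathcal{A}=(Q,\Sigma,\delta)$ has a finite state set $Q=\{1,\dots,n\}$, finite alphabet $\Sigma$ and total transition function, extended to words; $q.w=\delta(q,w)$. It is synchronizing if some word $w$ satisfies $|Q.w|=1$. It is strongly connected if every state is reachable from every state. Vectors are row vectors; $[q]\in\mathbb{R}^n$ is the standard basis vector of state $q$; for a word $w$, $[w]$ is the $n\times n$ 0-1 matrix with $[w]_{p,q}=1$ iff $p.w=q$. A stochastic vector is a non-negative vector whose entries sum to $1$. A set of words $W$ is complete for a subspace $V\le\mathbb{R}^n$ with respect to $g\in V$ if $\langle g[w]\mid w\in W\rangle=V$. *)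

theory Defs
  imports "HOL-Analysis.Analysis"
begin

definition delta_word :: "('q \<Rightarrow> 'a \<Rightarrow> 'q) \<Rightarrow> 'q \<Rightarrow> 'a list \<Rightarrow> 'q" where
  "delta_word \<delta> q w = foldl \<delta> q w"

definition strongly_connected :: "('q \<Rightarrow> 'a \<Rightarrow> 'q) \<Rightarrow> bool" where
  "strongly_connected \<delta> \<longleftrightarrow> (\<forall>p q. \<exists>w. delta_word \<delta> p w = q)"

definition synchronizing :: "('q \<Rightarrow> 'a \<Rightarrow> 'q) \<Rightarrow> bool" where
  "synchronizing \<delta> \<longleftrightarrow> (\<exists>w. card ((\<lambda>q. delta_word \<delta> q w) ` UNIV) = 1)"

definition word_matrix :: "('q::finite \<Rightarrow> 'a \<Rightarrow> 'q) \<Rightarrow> 'a list \<Rightarrow> real^'q^'q" where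
  "word_matrix \<delta> w = (\<chi> p q. if delta_word \<delta> p w = q then 1 else 0)"

definition stochastic_vector :: "real^'q::finite \<Rightarrow> bool" where
  "stochastic_vector v \<longleftrightarrow> (\<forall>q. v $ q \<ge> 0) \<and> (\<Sum>q\<in>UNIV. v $ q) = 1"

definition complete_for :: "('q::finite \<Rightarrow> 'a \<Rightarrow> 'q) \<Rightarrow> 'a list set \<Rightarrow> (real^'q) set \<Rightarrow> real^'q \<Rightarrow> bool" where
  "complete_for \<delta> W V g \<longleftrightarrow> span {g v* word_matrix \<delta> w | w. w \<in> W} = V"

end

theory Submission
  imports Defs
begin

text \<open>If w maps every state to s and s.u = q, then \<open>\<alpha>\<close>[w u] = e_q because the entries of \<open>\<alpha>\<close> sum
  to 1; by strong connectivity every unit vector arises, so all words form a complete set.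
  Conversely, (\<open>\<alpha>\<close>[w])_q is the \<open>\<alpha>\<close>-mass of the preimage of q under w, and by stationarity it is
  the P-mean of the masses for the one-letter extensions a w. Hence the largest mass at a state in
  the image of a word of minimal rank propagates to all extensions of that word. A word of minimal
  rank stays injective on its image under any continuation, so strong connectivity transfers this
  maximum to every state in the image of every word z of minimal rank, and \<open>\<alpha>\<close>[w z] = \<open>\<alpha>\<close>[z] for all
  w. Thus [z] maps a complete set, hence the whole space, into a line; since e_p[z] = e_(p.z), the
  image of z is a single state.\<close>

definition word_image :: "('q \<Rightarrow> 'a \<Rightarrow> 'q) \<Rightarrow> 'a list \<Rightarrow> 'q set" where
  "word_image \<delta> w = range (\<lambda>p. delta_word \<delta> p w)"

definition min_rank_word :: "('q \<Rightarrow> 'a \<Rightarrow> 'q) \<Rightarrow> 'a list \<Rightarrow> bool" where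
  "min_rank_word \<delta> w \<longleftrightarrow> (\<forall>v. card (word_image \<delta> w) \<le> card (word_image \<delta> v))"

subsection \<open>Words acting on states\<close>

lemma delta_word_append [simp]:
  "delta_word \<delta> p (u @ v) = delta_word \<delta> (delta_word \<delta> p u) v"
  by (simp add: delta_word_def)

lemma word_image_append: "word_image \<delta> (u @ v) = (\<lambda>q. delta_word \<delta> q v) ` word_image \<delta> u"
  by (auto simp: word_image_def)

lemma word_image_append_subset: "word_image \<delta> (u @ v) \<subseteq> word_image \<delta> v"
  by (auto simp: word_image_def)

lemma card_word_image_append_le_left:
  fixes \<delta> :: "'q::finite \<Rightarrow> 'a \<Rightarrow> 'q"
  shows "card (word_image \<delta> (u @ v)) \<le> card (word_image \<delta> u)"
  by (simp add: word_image_append card_image_le)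

lemma card_word_image_append_le_right:
  fixes \<delta> :: "'q::finite \<Rightarrow> 'a \<Rightarrow> 'q"
  shows "card (word_image \<delta> (u @ v)) \<le> card (word_image \<delta> v)"
  by (simp add: card_mono word_image_append_subset)

lemma min_rank_word_exists: "\<exists>z. min_rank_word \<delta> z"
  unfolding min_rank_word_def
  using ex_has_least_nat[of "\<lambda>_. True" "[]" "\<lambda>w. card (word_image \<delta> w)"] by blast

lemma min_rank_word_append_left:
  fixes \<delta> :: "'q::finite \<Rightarrow> 'a \<Rightarrow> 'q"
  assumes "min_rank_word \<delta> w"
  shows "min_rank_word \<delta> (u @ w)"
  using assms card_word_image_append_le_right[of \<delta> u w]
  unfolding min_rank_word_def by (meson order_trans)

lemma min_rank_word_append_right:
  fixes \<delta> :: "'q::finite \<Rightarrow> 'a \<Rightarrow> 'q"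
  assumes "min_rank_word \<delta> w"
  shows "min_rank_word \<delta> (w @ u)"
  using assms card_word_image_append_le_left[of \<delta> w u]
  unfolding min_rank_word_def by (meson order_trans)

lemma card_word_image_min_rank_word:
  assumes "min_rank_word \<delta> z" "min_rank_word \<delta> w"
  shows "card (word_image \<delta> w) = card (word_image \<delta> z)"
  using assms unfolding min_rank_word_def by (simp add: le_antisym)

lemma word_image_append_min_rank_word:
  fixes \<delta> :: "'q::finite \<Rightarrow> 'a \<Rightarrow> 'q"
  assumes "min_rank_word \<delta> z"
  shows "word_image \<delta> (w @ z) = word_image \<delta> z"
  using card_word_image_min_rank_word[OF assms min_rank_word_append_left[OF assms]]
  by (intro card_subset_eq word_image_append_subset) simp_all

lemma preimage_append_eq:
  fixes \<delta> :: "'q::finite \<Rightarrow> 'a \<Rightarrow> 'q"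
  assumes rank: "card (word_image \<delta> (z @ v)) = card (word_image \<delta> z)"
    and s: "s \<in> word_image \<delta> z"
  shows "{p. delta_word \<delta> p (z @ v) = delta_word \<delta> s v} = {p. delta_word \<delta> p z = s}"
proof -
  have "inj_on (\<lambda>q. delta_word \<delta> q v) (word_image \<delta> z)"
    using rank by (simp add: word_image_append eq_card_imp_inj_on)
  then show ?thesis
    using s by (auto simp: word_image_def dest: inj_onD)
qed

subsection \<open>Word matrices\<close>

lemma word_matrix_append:
  fixes \<delta> :: "'q::finite \<Rightarrow> 'a \<Rightarrow> 'q"
  shows "word_matrix \<delta> (u @ v) = word_matrix \<delta> u ** word_matrix \<delta> v"
proof -
  have "(\<Sum>k\<in>UNIV. (if delta_word \<delta> p u = k then 1 else 0) *
           (if delta_word \<delta> k v = q then 1 else (0::real)))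
        = (\<Sum>k\<in>UNIV. if k = delta_word \<delta> p u then (if delta_word \<delta> k v = q then 1 else 0) else 0)"
    for p q
    by (rule sum.cong) auto
  then show ?thesis
    by (simp add: word_matrix_def matrix_matrix_mult_def vec_eq_iff)
qed

lemma vector_word_matrix_nth:
  fixes \<delta> :: "'q::finite \<Rightarrow> 'a \<Rightarrow> 'q"
  shows "(x v* word_matrix \<delta> w) $ q = (\<Sum>p | delta_word \<delta> p w = q. x $ p)"
  by (simp add: vector_matrix_mult_def word_matrix_def if_distrib sum.If_cases)

lemma vector_word_matrix_nth_notin_word_image:
  fixes \<delta> :: "'q::finite \<Rightarrow> 'a \<Rightarrow> 'q"
  assumes "q \<notin> word_image \<delta> w"
  shows "(x v* word_matrix \<delta> w) $ q = 0"
proof -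
  have "{p. delta_word \<delta> p w = q} = {}"
    using assms by (auto simp: word_image_def)
  then show ?thesis
    by (simp add: vector_word_matrix_nth)
qed

lemma axis_vector_word_matrix:
  fixes \<delta> :: "'q::finite \<Rightarrow> 'a \<Rightarrow> 'q"
  shows "axis p 1 v* word_matrix \<delta> w = axis (delta_word \<delta> p w) (1::real)"
  by (simp add: vec_eq_iff vector_word_matrix_nth axis_def)

lemma linear_vector_matrix_mult: "linear (\<lambda>x. x v* (A :: real^'m::finite^'n::finite))"
  using matrix_vector_mul_linear[of "transpose A"] by simp

lemma vector_matrix_mult_sum_scaleR:
  fixes A :: "'i \<Rightarrow> real^'m::finite^'n::finite"
  shows "x v* (\<Sum>i\<in>I. c i *\<^sub>R A i) = (\<Sum>i\<in>I. c i *\<^sub>R (x v* A i))"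
proof (cases "finite I")
  case True
  then show ?thesis
  proof (induction I rule: finite_induct)
    case (insert i I)
    have "x v* (c i *\<^sub>R A i) = c i *\<^sub>R (x v* A i)"
      by (simp add: vec_eq_iff vector_matrix_mult_def sum_distrib_left ac_simps)
    with insert show ?case
      by (simp add: vec_eq_iff vector_matrix_mult_def sum.distrib ring_distribs)
  qed simp
qed simp

subsection \<open>The stationary distribution\<close>

lemma stationary_vector_word_matrix:
  fixes \<delta> :: "'q::finite \<Rightarrow> 'a::finite \<Rightarrow> 'q"
  assumes "\<alpha> v* (\<Sum>a\<in>UNIV. P a *\<^sub>R word_matrix \<delta> [a]) = \<alpha>"
  shows "\<alpha> v* word_matrix \<delta> w = (\<Sum>a\<in>UNIV. P a *\<^sub>R (\<alpha> v* word_matrix \<delta> (a # w)))"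
proof -
  have "\<alpha> v* word_matrix \<delta> w = (\<Sum>a\<in>UNIV. P a *\<^sub>R (\<alpha> v* word_matrix \<delta> [a])) v* word_matrix \<delta> w"
    by (simp add: assms flip: vector_matrix_mult_sum_scaleR)
  also have "\<dots> = (\<Sum>a\<in>UNIV. P a *\<^sub>R ((\<alpha> v* word_matrix \<delta> [a]) v* word_matrix \<delta> w))"
    by (simp add: linear_sum[OF linear_vector_matrix_mult] linear_scale[OF linear_vector_matrix_mult]
        o_def)
  finally show ?thesis
    by (simp add: vector_matrix_mul_assoc flip: word_matrix_append)
qed

lemma weighted_mean_eq_max_imp_eq:
  fixes P x :: "'a::finite \<Rightarrow> real"
  assumes "\<forall>a. P a > 0" "(\<Sum>a\<in>UNIV. P a) = 1"
    and "\<forall>a. x a \<le> m" "(\<Sum>a\<in>UNIV. P a * x a) = m"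
  shows "x a = m"
proof -
  have "(\<Sum>b\<in>UNIV. P b * (m - x b)) = 0"
    using assms(2,4) by (simp add: algebra_simps sum_subtractf flip: sum_distrib_left)
  moreover have "\<forall>b\<in>UNIV. P b * (m - x b) \<ge> 0"
    using assms(1,3) by (simp add: less_imp_le)
  ultimately have "P a * (m - x a) = 0"
    by (simp add: sum_nonneg_eq_0_iff)
  then show ?thesis
    using assms(1) by (metis eq_iff_diff_eq_0 mult_eq_0_iff order_less_irrefl)
qed

lemma mean_value_max_propagates_to_prefixes:
  fixes f :: "'a::finite list \<Rightarrow> real"
  assumes P: "\<forall>a. P a > 0" "(\<Sum>a\<in>UNIV. P a) = 1"
    and mean: "\<forall>w. f w = (\<Sum>a\<in>UNIV. P a * f (a # w))"
    and le: "\<forall>u. f (u @ w0) \<le> m" and "f w0 = m"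
  shows "f (u @ w0) = m"
proof (induction u)
  case (Cons a u)
  have "\<forall>b. f (b # u @ w0) \<le> m"
    using le by (metis append_Cons)
  moreover have "(\<Sum>b\<in>UNIV. P b * f (b # u @ w0)) = m"
    using mean Cons.IH by metis
  ultimately show ?case
    using weighted_mean_eq_max_imp_eq[OF P] by simp
qed (use \<open>f w0 = m\<close> in simp)

lemma synchronizing_imp_complete_for:
  fixes \<delta> :: "'q::finite \<Rightarrow> 'a \<Rightarrow> 'q"
  assumes "strongly_connected \<delta>" "stochastic_vector \<alpha>" "synchronizing \<delta>"
  shows "complete_for \<delta> UNIV UNIV \<alpha>"
proof -
  let ?X = "{\<alpha> v* word_matrix \<delta> w | w. w \<in> UNIV}"
  obtain w0 s where s: "range (\<lambda>p. delta_word \<delta> p w0) = {s}"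
    using assms(3) unfolding synchronizing_def by (metis card_1_singletonE)
  have axis_in_span: "axis q 1 \<in> span ?X" for q
  proof -
    obtain u where "delta_word \<delta> s u = q"
      using assms(1) unfolding strongly_connected_def by blast
    with s have "delta_word \<delta> p (w0 @ u) = q" for p
      by auto
    then have "\<alpha> v* word_matrix \<delta> (w0 @ u) = axis q 1"
      using assms(2) by (simp add: vec_eq_iff vector_word_matrix_nth axis_def stochastic_vector_def)
    then show ?thesis
      by (metis (mono_tags, lifting) UNIV_I mem_Collect_eq span_base)
  qed
  have "x \<in> span ?X" for x
  proof -
    have "x = (\<Sum>i\<in>UNIV. x $ i *\<^sub>R axis i 1)"
      using basis_expansion[of x] by (simp add: scalar_mult_eq_scaleR)
    also have "\<dots> \<in> span ?X"
      using axis_in_span by (intro span_sum span_scale)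
    finally show ?thesis .
  qed
  then show ?thesis
    unfolding complete_for_def by blast
qed

lemma mass_constant_on_min_rank_images:
  fixes \<delta> :: "'q::finite \<Rightarrow> 'a::finite \<Rightarrow> 'q"
  assumes sc: "strongly_connected \<delta>"
    and P: "\<forall>a. P a > 0" "(\<Sum>a\<in>UNIV. P a) = 1"
    and stat: "\<alpha> v* (\<Sum>a\<in>UNIV. P a *\<^sub>R word_matrix \<delta> [a]) = \<alpha>"
  shows "\<exists>m. \<forall>z s. min_rank_word \<delta> z \<longrightarrow> s \<in> word_image \<delta> z \<longrightarrow>
    (\<alpha> v* word_matrix \<delta> z) $ s = m"
proof -
  define wt where "wt w q = (\<alpha> v* word_matrix \<delta> w) $ q" for w q
  define Wt where "Wt = {wt w q | w q. min_rank_word \<delta> w \<and> q \<in> word_image \<delta> w}"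
  have "Wt \<subseteq> (\<lambda>A. \<Sum>p\<in>A. \<alpha> $ p) ` UNIV"
    unfolding Wt_def wt_def by (auto simp: vector_word_matrix_nth)
  then have finite_Wt: "finite Wt"
    by (rule finite_subset) simp
  have le_max: "wt w q \<le> Max Wt" if "min_rank_word \<delta> w" "q \<in> word_image \<delta> w" for w q
    using finite_Wt that unfolding Wt_def by (intro Max_ge) auto
  obtain z0 where "min_rank_word \<delta> z0"
    using min_rank_word_exists by blast
  then have "Wt \<noteq> {}"
    unfolding Wt_def word_image_def by blast
  with finite_Wt have "Max Wt \<in> Wt"
    by (rule Max_in)
  then obtain w0 q0 where w0: "min_rank_word \<delta> w0" and q0: "q0 \<in> word_image \<delta> w0"
    and max: "wt w0 q0 = Max Wt"
    unfolding Wt_def by auto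
  then obtain p0 where p0: "delta_word \<delta> p0 w0 = q0"
    by (auto simp: word_image_def)
  have mean: "\<forall>w. wt w q0 = (\<Sum>a\<in>UNIV. P a * wt (a # w) q0)"
    unfolding wt_def by (subst stationary_vector_word_matrix[OF stat]) (simp add: sum_component)
  have max_prefix: "wt (u @ w0) q0 = Max Wt" for u
  proof (rule mean_value_max_propagates_to_prefixes[OF P mean])
    show "\<forall>u. wt (u @ w0) q0 \<le> Max Wt"
      using le_max min_rank_word_append_left[OF w0] word_image_append_min_rank_word[OF w0] q0
      by simp
  qed (fact max)
  show ?thesis
  proof (intro exI allI impI)
    fix z s
    assume z: "min_rank_word \<delta> z" and s: "s \<in> word_image \<delta> z"
    obtain v where v: "delta_word \<delta> s v = p0"
      using sc unfolding strongly_connected_def by blast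
    have "card (word_image \<delta> (z @ v @ w0)) = card (word_image \<delta> z)"
      using card_word_image_min_rank_word[OF z min_rank_word_append_right[OF z]] by simp
    from preimage_append_eq[OF this s] have "wt z s = wt ((z @ v) @ w0) q0"
      using v p0 by (simp add: wt_def vector_word_matrix_nth)
    also have "\<dots> = Max Wt"
      by (rule max_prefix)
    finally show "(\<alpha> v* word_matrix \<delta> z) $ s = Max Wt"
      by (simp add: wt_def)
  qed
qed

lemma vector_word_matrix_prepend_min_rank_word:
  fixes \<delta> :: "'q::finite \<Rightarrow> 'a::finite \<Rightarrow> 'q"
  assumes "strongly_connected \<delta>" "\<forall>a. P a > 0" "(\<Sum>a\<in>UNIV. P a) = 1"
    and "\<alpha> v* (\<Sum>a\<in>UNIV. P a *\<^sub>R word_matrix \<delta> [a]) = \<alpha>"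
    and z: "min_rank_word \<delta> z"
  shows "\<alpha> v* word_matrix \<delta> (w @ z) = \<alpha> v* word_matrix \<delta> z"
proof -
  obtain m where m: "\<And>z s. min_rank_word \<delta> z \<Longrightarrow> s \<in> word_image \<delta> z \<Longrightarrow>
      (\<alpha> v* word_matrix \<delta> z) $ s = m"
    using mass_constant_on_min_rank_images[OF assms(1-4)] by blast
  have image: "word_image \<delta> (w @ z) = word_image \<delta> z"
    by (rule word_image_append_min_rank_word[OF z])
  have "(\<alpha> v* word_matrix \<delta> (w @ z)) $ s = (\<alpha> v* word_matrix \<delta> z) $ s" for s
    using m[OF z] m[OF min_rank_word_append_left[OF z]] image
    by (cases "s \<in> word_image \<delta> z") (simp_all add: vector_word_matrix_nth_notin_word_image)
  then show ?thesis
    by (simp add: vec_eq_iff)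
qed

lemma card_word_image_le_1_if_spanning_set_collapses:
  fixes \<delta> :: "'q::finite \<Rightarrow> 'a \<Rightarrow> 'q"
  assumes "span X = UNIV" "\<forall>x\<in>X. x v* word_matrix \<delta> z = c"
  shows "card (word_image \<delta> z) \<le> 1"
proof -
  have axis_multiple: "\<exists>k. axis s 1 = k *\<^sub>R c" if s: "s \<in> word_image \<delta> z" for s
  proof -
    obtain p where "delta_word \<delta> p z = s"
      using s by (auto simp: word_image_def)
    then have "axis s 1 \<in> (\<lambda>x. x v* word_matrix \<delta> z) ` span X"
      using assms(1) by (metis UNIV_I axis_vector_word_matrix image_eqI)
    also have "\<dots> = span ((\<lambda>x. x v* word_matrix \<delta> z) ` X)"
      by (rule span_linear_image[OF linear_vector_matrix_mult, symmetric])
    also have "\<dots> \<subseteq> span {c}"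
      using assms(2) by (intro span_mono) auto
    finally show ?thesis
      by (auto simp: span_singleton)
  qed
  have "s = s'" if images: "s \<in> word_image \<delta> z" "s' \<in> word_image \<delta> z" for s s'
  proof (rule ccontr)
    assume "s \<noteq> s'"
    obtain k k' where k: "axis s 1 = k *\<^sub>R c" and k': "axis s' 1 = k' *\<^sub>R c"
      using axis_multiple images by blast
    have "1 = k * c $ s" "0 = k * c $ s'" "1 = k' * c $ s'"
      using arg_cong[OF k, of "\<lambda>v. v $ s"] arg_cong[OF k, of "\<lambda>v. v $ s'"]
        arg_cong[OF k', of "\<lambda>v. v $ s'"] \<open>s \<noteq> s'\<close>
      by (simp_all add: axis_def)
    then show False
      by auto
  qed
  then show ?thesis
    by (simp add: card_le_Suc0_iff_eq)
qed

lemma complete_for_imp_synchronizing: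
  fixes \<delta> :: "'q::finite \<Rightarrow> 'a::finite \<Rightarrow> 'q"
  assumes "strongly_connected \<delta>" "\<forall>a. P a > 0" "(\<Sum>a\<in>UNIV. P a) = 1"
    and "\<alpha> v* (\<Sum>a\<in>UNIV. P a *\<^sub>R word_matrix \<delta> [a]) = \<alpha>"
    and "complete_for \<delta> W UNIV \<alpha>"
  shows "synchronizing \<delta>"
proof -
  obtain z where z: "min_rank_word \<delta> z"
    using min_rank_word_exists by blast
  have "\<forall>x\<in>{\<alpha> v* word_matrix \<delta> w | w. w \<in> W}. x v* word_matrix \<delta> z = \<alpha> v* word_matrix \<delta> z"
    using vector_word_matrix_prepend_min_rank_word[OF assms(1-4) z]
    by (auto simp: vector_matrix_mul_assoc simp flip: word_matrix_append)
  with assms(5) have "card (word_image \<delta> z) \<le> 1"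
    unfolding complete_for_def by (rule card_word_image_le_1_if_spanning_set_collapses)
  moreover have "word_image \<delta> z \<noteq> {}"
    by (simp add: word_image_def)
  ultimately have "card (word_image \<delta> z) = 1"
    by (simp add: card_gt_0_iff le_antisym Suc_leI)
  then show ?thesis
    unfolding synchronizing_def word_image_def by blast
qed

theorem mainTheorem2:
  fixes \<delta> :: "'q::finite \<Rightarrow> 'a::finite \<Rightarrow> 'q"
    and P :: "'a \<Rightarrow> real"
    and \<alpha> :: "real^'q"
  assumes "strongly_connected \<delta>"
    and "\<forall>a. P a > 0" and "(\<Sum>a\<in>UNIV. P a) = 1"
    and "stochastic_vector \<alpha>"
    and "\<alpha> v* (\<Sum>a\<in>UNIV. P a *\<^sub>R word_matrix \<delta> [a]) = \<alpha>"
  shows "synchronizing \<delta> \<longleftrightarrow> (\<exists>W. complete_for \<delta> W UNIV \<alpha>)"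
  using synchronizing_imp_complete_for[OF assms(1,4)] complete_for_imp_synchronizing[OF assms(1-3,5)]
  by blast

end
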